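(* Let $\langle X,d_X\rangle$ and $\langle Y,d_Y\rangle$ be metric spaces with completions $\langle X^*,d^*_X,\iota_X\rangle$ and $\langle Y^*,d^*_Y,\iota_Y\rangle$, and let $\hat f:X^*\to Y^*$ be continuous. (a) There is a continuous $f:\langle X,d_X\rangle\to\langle Y,d_Y\rangle$ with $\iota_Y\circ f=\hat f\circ\iota_X$ if and only if $\operatorname{ran}(\hat f\circ\iota_X)\subseteq\operatorname{ran}\iota_Y$. Moreover, such $f$ is unique and it is Cauchy-continuous. (b) There exist a cardinal $\eta\leq|X|+|Y|$, a metric $d'$ on $\eta$, and dense isometries $\iota:\langle Y,d_Y\rangle\to\langle\eta,d'\rangle$ and $\iota':\langle\eta,d'\rangle\to\langle Y^*,d^*_Y\rangle$ such that $\operatorname{ran}(\hat f\circ\iota_X)\subseteq\operatorname{ran}\iota'$.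
   Context: A dense isometry is a distance-preserving map (not necessarily onto) with dense image. A completion of $\langle X,d\rangle$ is a triple $\langle X^*,d^*,\iota\rangle$ with $\langle X^*,d^*\rangle$ complete and $\iota$ a dense isometry from $\langle X,d\rangle$ into it. A function between metric spaces is Cauchy-continuous if it maps Cauchy sequences to Cauchy sequences. *)

theory Defs
  imports "HOL-Analysis.Analysis"
begin

definition isometry_map :: "'a metric \<Rightarrow> 'b metric \<Rightarrow> ('a \<Rightarrow> 'b) \<Rightarrow> bool" where
  "isometry_map m1 m2 f \<longleftrightarrow>
     f \<in> mspace m1 \<rightarrow> mspace m2 \<and>
     (\<forall>x\<in>mspace m1. \<forall>y\<in>mspace m1. mdist m2 (f x) (f y) = mdist m1 x y)"

definition dense_isometry :: "'a metric \<Rightarrow> 'b metric \<Rightarrow> ('a \<Rightarrow> 'b) \<Rightarrow> bool" where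
  "dense_isometry m1 m2 f \<longleftrightarrow>
     isometry_map m1 m2 f \<and> mtopology_of m2 closure_of (f ` mspace m1) = mspace m2"

definition completion :: "'a metric \<Rightarrow> 'b metric \<Rightarrow> ('a \<Rightarrow> 'b) \<Rightarrow> bool" where
  "completion m ms \<iota> \<longleftrightarrow> mcomplete_of ms \<and> dense_isometry m ms \<iota>"

end

theory Submission
  imports Defs
begin

text \<open>An isometry is a homeomorphism onto its range, so \<open>fh \<circ> \<iota>X\<close> lifts to a continuous map
  into \<open>Y\<close> exactly when it takes values in the range of \<open>\<iota>Y\<close>, and the lift is unique because
  \<open>\<iota>Y\<close> is injective. As \<open>X\<^sup>*\<close> is complete, \<open>fh\<close> is Cauchy-continuous, hence so is
  \<open>\<iota>Y \<circ> f = fh \<circ> \<iota>X\<close>; since \<open>\<iota>Y\<close> reflects Cauchy sequences, \<open>f\<close> is Cauchy-continuous.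
  For (b), take \<open>Y\<close> together with one point of \<open>X\<close> for each value of \<open>fh \<circ> \<iota>X\<close> outside the
  range of \<open>\<iota>Y\<close>, metrised by pulling back the metric of \<open>Y\<^sup>*\<close>; the copy of \<open>Y\<close> is dense in it
  because the range of \<open>\<iota>Y\<close> is dense in \<open>Y\<^sup>*\<close>. The sum type \<open>'a + 'b\<close> stands in for the
  cardinal \<open>\<eta>\<close>.\<close>

lemma closure_of_mtopology_of:
  "mtopology_of m closure_of S =
     {x \<in> mspace m. \<forall>r>0. \<exists>y\<in>S. y \<in> mspace m \<and> mdist m x y < r}"
  by (auto simp: mtopology_of_def Metric_space.metric_closure_of Metric_space.in_mball)

lemma isometry_imp_Lipschitz_continuous_map:
  assumes "isometry_map m1 m2 f"
  shows "Lipschitz_continuous_map m1 m2 f"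
  using assms unfolding isometry_map_def Lipschitz_continuous_map_def
  by (metis mult_1 order_refl)

lemma isometry_imp_continuous_map:
  "isometry_map m1 m2 f \<Longrightarrow> continuous_map (mtopology_of m1) (mtopology_of m2) f"
  by (simp add: Lipschitz_continuous_imp_continuous_map isometry_imp_Lipschitz_continuous_map)

lemma isometry_imp_inj_on:
  assumes "isometry_map m1 m2 f"
  shows "inj_on f (mspace m1)"
proof
  fix x y assume "x \<in> mspace m1" "y \<in> mspace m1" "f x = f y"
  with assms have "mdist m1 x y = 0"
    unfolding isometry_map_def by (metis PiE mdist_zero)
  with \<open>x \<in> mspace m1\<close> \<open>y \<in> mspace m1\<close> show "x = y" by simp
qed

lemma isometry_inv_into:
  assumes "isometry_map m1 m2 f"
  shows "isometry_map (submetric m2 (f ` mspace m1)) m1 (inv_into (mspace m1) f)"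
  using assms unfolding isometry_map_def
  by (auto simp: inv_into_into inv_into_f_f isometry_imp_inj_on[OF assms])

lemma continuous_map_inv_into_isometry:
  assumes f: "isometry_map m1 m2 f"
    and g: "continuous_map X (mtopology_of m2) g"
    and sub: "g ` topspace X \<subseteq> f ` mspace m1"
  shows "continuous_map X (mtopology_of m1) (\<lambda>x. inv_into (mspace m1) f (g x))"
proof -
  have "continuous_map X (mtopology_of (submetric m2 (f ` mspace m1))) g"
    using g sub by (auto simp: mtopology_of_submetric intro: continuous_map_into_subtopology)
  from continuous_map_compose[OF this isometry_imp_continuous_map[OF isometry_inv_into[OF f]]]
  show ?thesis by (simp add: comp_def)
qed

lemma Cauchy_continuous_map_cancel_isometry:
  assumes \<iota>: "isometry_map m2 m3 \<iota>"
    and f: "f \<in> mspace m1 \<rightarrow> mspace m2"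
    and \<iota>f: "Cauchy_continuous_map m1 m3 (\<iota> \<circ> f)"
  shows "Cauchy_continuous_map m1 m2 f"
proof -
  have "Cauchy_continuous_map m1 (submetric m3 (\<iota> ` mspace m2)) (\<iota> \<circ> f)"
    using f \<iota>f by (auto simp: Cauchy_continuous_map_into_submetric)
  from Cauchy_continuous_map_compose[OF this
      Lipschitz_imp_Cauchy_continuous_map[OF isometry_imp_Lipschitz_continuous_map[OF isometry_inv_into[OF \<iota>]]]]
  show ?thesis
    by (rule Cauchy_continuous_map_eq[rotated])
      (use f isometry_imp_inj_on[OF \<iota>] in \<open>auto simp: inv_into_f_f Pi_iff\<close>)
qed

lemma isometry_closure_of_preimage:
  assumes j: "isometry_map m1 m2 j" and A: "A \<subseteq> mspace m1"
    and dense: "mtopology_of m2 closure_of (j ` A) = mspace m2"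
  shows "mtopology_of m1 closure_of A = mspace m1"
proof -
  have "x \<in> mtopology_of m1 closure_of A" if x: "x \<in> mspace m1" for x
  proof -
    have "\<exists>a\<in>A. mdist m1 x a < r" if "r > 0" for r
    proof -
      have "j x \<in> mspace m2" using j x unfolding isometry_map_def by auto
      then obtain a where "a \<in> A" "mdist m2 (j x) (j a) < r"
        using dense \<open>r > 0\<close> by (auto simp: closure_of_mtopology_of)
      then show ?thesis using j x A unfolding isometry_map_def by (metis subsetD)
    qed
    then show ?thesis using x A by (auto simp: closure_of_mtopology_of)
  qed
  then show ?thesis using closure_of_subset_topspace[of "mtopology_of m1" A] by auto
qed

lemma Metric_space_pullback:
  assumes "inj_on j M" "j ` M \<subseteq> mspace m"
  shows "Metric_space M (\<lambda>u v. mdist m (j u) (j v))"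
proof
  show "0 \<le> mdist m (j x) (j y)" for x y by simp
  show "mdist m (j x) (j y) = mdist m (j y) (j x)" for x y by (simp add: mdist_commute)
  show "mdist m (j x) (j y) = 0 \<longleftrightarrow> x = y" if "x \<in> M" "y \<in> M" for x y
    using assms that by (auto simp: inj_on_def image_subset_iff)
  show "mdist m (j x) (j z) \<le> mdist m (j x) (j y) + mdist m (j y) (j z)"
    if "x \<in> M" "y \<in> M" "z \<in> M" for x y z
    using assms that by (auto intro: mdist_triangle)
qed

lemma continuous_lift_through_isometry_iff:
  assumes \<iota>: "isometry_map Y Z \<iota>" and g: "continuous_map (mtopology_of X) (mtopology_of Z) g"
  shows "(\<exists>f. continuous_map (mtopology_of X) (mtopology_of Y) f \<and> (\<forall>x\<in>mspace X. \<iota> (f x) = g x))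
           \<longleftrightarrow> g ` mspace X \<subseteq> \<iota> ` mspace Y"
proof
  assume "\<exists>f. continuous_map (mtopology_of X) (mtopology_of Y) f \<and> (\<forall>x\<in>mspace X. \<iota> (f x) = g x)"
  then show "g ` mspace X \<subseteq> \<iota> ` mspace Y"
    by (force simp: continuous_map_def)
next
  assume sub: "g ` mspace X \<subseteq> \<iota> ` mspace Y"
  then have "continuous_map (mtopology_of X) (mtopology_of Y) (\<lambda>x. inv_into (mspace Y) \<iota> (g x))"
    by (intro continuous_map_inv_into_isometry[OF \<iota> g]) simp
  moreover have "\<forall>x\<in>mspace X. \<iota> (inv_into (mspace Y) \<iota> (g x)) = g x"
    using sub by (auto intro!: f_inv_into_f)
  ultimately show "\<exists>f. continuous_map (mtopology_of X) (mtopology_of Y) f \<and> (\<forall>x\<in>mspace X. \<iota> (f x) = g x)"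
    by blast
qed

lemma lift_through_isometry_unique:
  assumes "isometry_map Y Z \<iota>"
    and "f \<in> mspace X \<rightarrow> mspace Y" "\<forall>x\<in>mspace X. \<iota> (f x) = g x"
    and "f' \<in> mspace X \<rightarrow> mspace Y" "\<forall>x\<in>mspace X. \<iota> (f' x) = g x"
  shows "\<forall>x\<in>mspace X. f x = f' x"
  using assms isometry_imp_inj_on[OF assms(1)] by (metis PiE inj_onD)

lemma Cauchy_continuous_map_completion_comp:
  assumes "completion X Xs \<iota>" "continuous_map (mtopology_of Xs) (mtopology_of Z) h"
  shows "Cauchy_continuous_map X Z (h \<circ> \<iota>)"
proof (rule Cauchy_continuous_map_compose)
  show "Cauchy_continuous_map X Xs \<iota>"
    using assms(1) unfolding completion_def dense_isometry_def
    by (auto intro: Lipschitz_imp_Cauchy_continuous_map isometry_imp_Lipschitz_continuous_map)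
  show "Cauchy_continuous_map Xs Z h"
    using assms unfolding completion_def mcomplete_of_def
    by (auto intro: continuous_imp_Cauchy_continuous_map)
qed

lemma Cauchy_continuous_map_lift_through_isometry:
  assumes cX: "completion X Xs \<iota>X" and \<iota>: "isometry_map Y Z \<iota>"
    and h: "continuous_map (mtopology_of Xs) (mtopology_of Z) h"
    and f: "f \<in> mspace X \<rightarrow> mspace Y" "\<forall>x\<in>mspace X. \<iota> (f x) = h (\<iota>X x)"
  shows "Cauchy_continuous_map X Y f"
proof (rule Cauchy_continuous_map_cancel_isometry[OF \<iota> f(1)])
  show "Cauchy_continuous_map X Z (\<iota> \<circ> f)"
    using f(2) by (intro Cauchy_continuous_map_eq[OF _ Cauchy_continuous_map_completion_comp[OF cX h]]) auto
qed

lemma inj_on_case_sum: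
  assumes "inj_on f A" "inj_on g B" "f ` A \<inter> g ` B = {}"
  shows "inj_on (case_sum f g) (Inl ` A \<union> Inr ` B)"
proof -
  have "f a \<noteq> g b" "g b \<noteq> f a" if "a \<in> A" "b \<in> B" for a b
    using assms(3) that by blast+
  with assms(1,2) show ?thesis
    by (intro inj_onI) (auto elim!: UnE imageE dest: inj_onD)
qed

lemma dense_isometry_extend_range:
  fixes Y :: "'b metric" and Z :: "'d metric" and g :: "'a \<Rightarrow> 'd"
  assumes \<iota>: "dense_isometry Y Z \<iota>" and g: "g ` S \<subseteq> mspace Z"
  obtains E :: "('a + 'b) metric" and j where
    "mspace E \<subseteq> S <+> mspace Y" "dense_isometry Y E Inr" "dense_isometry E Z j"
    "g ` S \<subseteq> j ` mspace E"
proof -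
  have iso: "isometry_map Y Z \<iota>" and dense: "mtopology_of Z closure_of (\<iota> ` mspace Y) = mspace Z"
    using \<iota> unfolding dense_isometry_def by auto
  define B where "B = g ` S - \<iota> ` mspace Y"
  define T where "T = inv_into S g ` B"
  define M :: "('a + 'b) set" where "M = Inl ` T \<union> Inr ` mspace Y"
  define j where "j = case_sum g \<iota>"
  have TS: "T \<subseteq> S"
    unfolding T_def B_def by (auto intro: inv_into_into)
  have gT: "g ` T = B"
    unfolding T_def by (rule image_inv_into_cancel[OF refl]) (auto simp: B_def)
  have "inj_on g T"
  proof (rule inj_onI)
    fix t t' assume "t \<in> T" "t' \<in> T" "g t = g t'"
    then obtain b b' where "b \<in> B" "b' \<in> B" "t = inv_into S g b" "t' = inv_into S g b'"
      unfolding T_def by blast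
    with \<open>g t = g t'\<close> show "t = t'"
      unfolding B_def by (metis DiffD1 f_inv_into_f)
  qed
  moreover have "g ` T \<inter> \<iota> ` mspace Y = {}"
    unfolding gT B_def by blast
  ultimately have inj: "inj_on j M"
    unfolding M_def j_def by (rule inj_on_case_sum[OF _ isometry_imp_inj_on[OF iso]])
  have "j ` M = g ` T \<union> \<iota> ` mspace Y"
    by (simp add: M_def j_def image_Un image_image)
  then have jM: "j ` M = g ` S \<union> \<iota> ` mspace Y"
    unfolding gT B_def by blast
  have jZ: "j ` M \<subseteq> mspace Z"
    using jM g iso unfolding isometry_map_def by auto
  interpret E: Metric_space M "\<lambda>u v. mdist Z (j u) (j v)"
    by (rule Metric_space_pullback[OF inj jZ])
  define E where "E = metric (M, \<lambda>u v. mdist Z (j u) (j v))"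
  have mE: "mspace E = M" and dE: "mdist E = (\<lambda>u v. mdist Z (j u) (j v))"
    unfolding E_def by simp_all
  have isoE: "isometry_map E Z j"
    using jZ unfolding isometry_map_def mE dE by auto
  have YM: "Inr ` mspace Y \<subseteq> mspace E" and jY: "j ` Inr ` mspace Y = \<iota> ` mspace Y"
    by (simp_all add: mE M_def j_def image_image)
  have "isometry_map Y E Inr"
    using iso YM unfolding isometry_map_def dE j_def by auto
  moreover have "mtopology_of E closure_of (Inr ` mspace Y) = mspace E"
    using isometry_closure_of_preimage[OF isoE YM] dense jY by simp
  moreover have "mtopology_of Z closure_of (j ` mspace E) = mspace Z"
  proof -
    have "\<iota> ` mspace Y \<subseteq> j ` mspace E"
      unfolding mE jM by (rule Un_upper2)
    then have "mspace Z \<subseteq> mtopology_of Z closure_of (j ` mspace E)"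
      by (metis closure_of_mono dense)
    then show ?thesis using closure_of_subset_topspace[of "mtopology_of Z"] by auto
  qed
  moreover have "mspace E \<subseteq> S <+> mspace Y"
    using TS unfolding mE M_def Plus_def by (intro Un_mono image_mono) auto
  moreover have "g ` S \<subseteq> j ` mspace E"
    unfolding mE jM by (rule Un_upper1)
  ultimately show ?thesis
    using isoE by (intro that) (simp_all add: dense_isometry_def)
qed

theorem lemma4p3:
  fixes X :: "'a metric" and Y :: "'b metric"
    and Xs :: "'c metric" and Ys :: "'d metric"
    and \<iota>X :: "'a \<Rightarrow> 'c" and \<iota>Y :: "'b \<Rightarrow> 'd" and fh :: "'c \<Rightarrow> 'd"
  assumes cX: "completion X Xs \<iota>X"
    and cY: "completion Y Ys \<iota>Y"
    and fh: "continuous_map (mtopology_of Xs) (mtopology_of Ys) fh"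
  shows
    "((\<exists>f. continuous_map (mtopology_of X) (mtopology_of Y) f \<and>
            (\<forall>x\<in>mspace X. \<iota>Y (f x) = fh (\<iota>X x)))
        \<longleftrightarrow> fh ` \<iota>X ` mspace X \<subseteq> \<iota>Y ` mspace Y)
     \<and> (\<forall>f g. continuous_map (mtopology_of X) (mtopology_of Y) f \<and>
              (\<forall>x\<in>mspace X. \<iota>Y (f x) = fh (\<iota>X x)) \<and>
              continuous_map (mtopology_of X) (mtopology_of Y) g \<and>
              (\<forall>x\<in>mspace X. \<iota>Y (g x) = fh (\<iota>X x))
              \<longrightarrow> (\<forall>x\<in>mspace X. f x = g x))
     \<and> (\<forall>f. continuous_map (mtopology_of X) (mtopology_of Y) f \<and>
              (\<forall>x\<in>mspace X. \<iota>Y (f x) = fh (\<iota>X x))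
              \<longrightarrow> Cauchy_continuous_map X Y f)
     \<and> (\<exists>(E :: ('a + 'b) metric) \<iota> \<iota>'.
           (card_of (mspace E), card_of (mspace X <+> mspace Y)) \<in> ordLeq \<and>
           dense_isometry Y E \<iota> \<and> dense_isometry E Ys \<iota>' \<and>
           fh ` \<iota>X ` mspace X \<subseteq> \<iota>' ` mspace E)"
proof -
  have isX: "isometry_map X Xs \<iota>X"
    using cX by (simp add: completion_def dense_isometry_def)
  have dY: "dense_isometry Y Ys \<iota>Y" and isY: "isometry_map Y Ys \<iota>Y"
    using cY by (simp_all add: completion_def dense_isometry_def)
  have g: "continuous_map (mtopology_of X) (mtopology_of Ys) (\<lambda>x. fh (\<iota>X x))"
    using continuous_map_compose[OF isometry_imp_continuous_map[OF isX] fh] by (simp add: comp_def)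
  then have "(\<lambda>x. fh (\<iota>X x)) ` mspace X \<subseteq> mspace Ys"
    by (metis continuous_map_image_subset_topspace topspace_mtopology_of)
  then obtain E :: "('a + 'b) metric" and j where E: "mspace E \<subseteq> mspace X <+> mspace Y"
    and ext: "dense_isometry Y E Inr" "dense_isometry E Ys j" "(\<lambda>x. fh (\<iota>X x)) ` mspace X \<subseteq> j ` mspace E"
    by (rule dense_isometry_extend_range[OF dY])
  note into = continuous_map_funspace[where X = "mtopology_of X" and Y = "mtopology_of Y", simplified]
  show ?thesis
    unfolding image_image
  proof (intro conjI allI impI; (elim conjE)?)
    show "(\<exists>f. continuous_map (mtopology_of X) (mtopology_of Y) f \<and> (\<forall>x\<in>mspace X. \<iota>Y (f x) = fh (\<iota>X x)))
           \<longleftrightarrow> (\<lambda>x. fh (\<iota>X x)) ` mspace X \<subseteq> \<iota>Y ` mspace Y"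
      by (rule continuous_lift_through_isometry_iff[OF isY g])
  next
    fix f f'
    assume "continuous_map (mtopology_of X) (mtopology_of Y) f" "\<forall>x\<in>mspace X. \<iota>Y (f x) = fh (\<iota>X x)"
      "continuous_map (mtopology_of X) (mtopology_of Y) f'" "\<forall>x\<in>mspace X. \<iota>Y (f' x) = fh (\<iota>X x)"
    then show "\<forall>x\<in>mspace X. f x = f' x"
      by (intro lift_through_isometry_unique[OF isY] into)
  next
    fix f
    assume "continuous_map (mtopology_of X) (mtopology_of Y) f" "\<forall>x\<in>mspace X. \<iota>Y (f x) = fh (\<iota>X x)"
    then show "Cauchy_continuous_map X Y f"
      by (intro Cauchy_continuous_map_lift_through_isometry[OF cX isY fh] into)
  next
    show "\<exists>(E :: ('a + 'b) metric) \<iota> \<iota>'.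
           (card_of (mspace E), card_of (mspace X <+> mspace Y)) \<in> ordLeq \<and>
           dense_isometry Y E \<iota> \<and> dense_isometry E Ys \<iota>' \<and>
           (\<lambda>x. fh (\<iota>X x)) ` mspace X \<subseteq> \<iota>' ` mspace E"
      using card_of_mono1[OF E] ext by blast
  qed
qed

end
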